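(* Let $S$ be a lattice of finite length and let $(L_x)_{x\in S}$, $(\varphi_{yx})_{x\le y}$ be an $S$-connected system with the $L_x$ pairwise disjoint. On $U=\bigcup_{x\in S}L_x$ define $a\sim b$ (for $a\in L_x$, $b\in L_y$) iff there is $z\in S$ with $z\ge x\vee y$, $a\in\operatorname{dom}\varphi_{zx}$, $b\in\operatorname{dom}\varphi_{zy}$ and $\varphi_{zx}(a)=\varphi_{zy}(b)$. Then $\sim$ is an equivalence relation on $U$; letting $\pi:U\to U/{\sim}$ be the canonical projection, $\pi$ is injective on each $L_x$; and if $L^\pi_x:=\pi(L_x)$ is given the lattice structure making $\pi|_{L_x}:L_x\to L^\pi_x$ an isomorphism, then $(L^\pi_x)_{x\in S}$ is an $S$-glued system. Moreover, this $S$-glued system is monotone if and only if for all $x\prec y$ in $S$, $\operatorname{im}\varphi_{yx}\ne L_y$ and $\operatorname{dom}\varphi_{yx}\ne L_x$.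
   Context: Let $S$ be a lattice of finite length (every chain in $S$ is finite), with order $\le$, join $\vee$ and meet $\wedge$; $x\prec y$ means that $y$ covers $x$. A \emph{partial bijection} $\varphi$ from a set $A$ to a set $B$ is a bijection from a subset $\operatorname{dom}\varphi\subseteq A$ onto a subset $\operatorname{im}\varphi\subseteq B$ (possibly empty); composites $\psi\circ\varphi$ of partial maps are defined at $a$ iff $a\in\operatorname{dom}\varphi$ and $\varphi(a)\in\operatorname{dom}\psi$. An \emph{$S$-connected system} consists of lattices $L_x$ ($x\in S$) of finite length and partial bijections $\varphi_{yx}$ from $L_x$ to $L_y$ for all $x\le y$ in $S$ such that for all $x,y\in S$: (17) if $\varphi_{yx}\ne\emptyset$ then $\operatorname{dom}\varphi_{yx}$ is a filter of $L_x$, $\operatorname{im}\varphi_{yx}$ is an ideal of $L_y$ and $\varphi_{yx}$ is a lattice isomorphism between them; $\varphi_{xx}=\mathrm{id}_{L_x}$; (18) if $x\prec y$ then $\varphi_{yx}\ne\emptyset$; (19) for $x\le z\le y$: $\varphi_{yx}=\varphi_{yz}\circ\varphi_{zx}$; (20) $\operatorname{im}\varphi_{(x\vee y)x}\cap\operatorname{im}\varphi_{(x\vee y)y}\subseteq\operatorname{im}\varphi_{(x\vee y)(x\wedge y)}$; (20$^\delta$) $\operatorname{dom}\varphi_{x(x\wedge y)}\cap\operatorname{dom}\varphi_{y(x\wedge y)}\subseteq\operatorname{dom}\varphi_{(x\vee y)(x\wedge y)}$. An \emph{$S$-glued system} is a family $(L_x,\le_x)_{x\in S}$ of lattices of finite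 length (with least element $0_x$, greatest element $1_x$), whose underlying sets may overlap, such that for all $x,y\in S$: (1) if $x\le y$ and $L_x\cap L_y\ne\emptyset$, then $L_x\cap L_y$ is a filter of $L_x$ and an ideal of $L_y$; (2) in the situation of (1), for all $a,b\in L_x\cap L_y$: $a\le_x b$ iff $a\le_y b$; (3) if $x\prec y$ then $L_x\cap L_y\ne\emptyset$; (4) $L_x\cap L_y\subseteq L_{x\wedge y}\cap L_{x\vee y}$. The system is \emph{monotone} if for all $x\prec y$ in $S$ both $L_y\not\subseteq L_x$ and $L_x\not\subseteq L_y$. *)

theory Defs
  imports Main
begin

definition is_lub :: "'a set \<Rightarrow> ('a \<Rightarrow> 'a \<Rightarrow> bool) \<Rightarrow> 'a \<Rightarrow> 'a \<Rightarrow> 'a \<Rightarrow> bool" where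
  "is_lub A le a b c \<longleftrightarrow> c \<in> A \<and> le a c \<and> le b c \<and> (\<forall>d\<in>A. le a d \<and> le b d \<longrightarrow> le c d)"

definition is_glb :: "'a set \<Rightarrow> ('a \<Rightarrow> 'a \<Rightarrow> bool) \<Rightarrow> 'a \<Rightarrow> 'a \<Rightarrow> 'a \<Rightarrow> bool" where
  "is_glb A le a b c \<longleftrightarrow> c \<in> A \<and> le c a \<and> le c b \<and> (\<forall>d\<in>A. le d a \<and> le d b \<longrightarrow> le d c)"

definition lattice_on :: "'a set \<Rightarrow> ('a \<Rightarrow> 'a \<Rightarrow> bool) \<Rightarrow> bool" where
  "lattice_on A le \<longleftrightarrow> A \<noteq> {}
     \<and> (\<forall>a\<in>A. le a a)
     \<and> (\<forall>a\<in>A. \<forall>b\<in>A. le a b \<and> le b a \<longrightarrow> a = b)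
     \<and> (\<forall>a\<in>A. \<forall>b\<in>A. \<forall>c\<in>A. le a b \<and> le b c \<longrightarrow> le a c)
     \<and> (\<forall>a\<in>A. \<forall>b\<in>A. \<exists>c. is_lub A le a b c)
     \<and> (\<forall>a\<in>A. \<forall>b\<in>A. \<exists>c. is_glb A le a b c)"

definition fin_length_lattice :: "'a set \<Rightarrow> ('a \<Rightarrow> 'a \<Rightarrow> bool) \<Rightarrow> bool" where
  "fin_length_lattice A le \<longleftrightarrow> lattice_on A le
     \<and> (\<forall>C. C \<subseteq> A \<and> Complete_Partial_Order.chain le C \<longrightarrow> finite C)"

definition lfilter :: "'a set \<Rightarrow> ('a \<Rightarrow> 'a \<Rightarrow> bool) \<Rightarrow> 'a set \<Rightarrow> bool" where
  "lfilter A le F \<longleftrightarrow> F \<subseteq> A \<and> F \<noteq> {}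
     \<and> (\<forall>a\<in>F. \<forall>b\<in>A. le a b \<longrightarrow> b \<in> F)
     \<and> (\<forall>a\<in>F. \<forall>b\<in>F. \<forall>c. is_glb A le a b c \<longrightarrow> c \<in> F)"

definition lideal :: "'a set \<Rightarrow> ('a \<Rightarrow> 'a \<Rightarrow> bool) \<Rightarrow> 'a set \<Rightarrow> bool" where
  "lideal A le I \<longleftrightarrow> I \<subseteq> A \<and> I \<noteq> {}
     \<and> (\<forall>a\<in>I. \<forall>b\<in>A. le b a \<longrightarrow> b \<in> I)
     \<and> (\<forall>a\<in>I. \<forall>b\<in>I. \<forall>c. is_lub A le a b c \<longrightarrow> c \<in> I)"

definition lattice_iso_on :: "'a set \<Rightarrow> ('a \<Rightarrow> 'a \<Rightarrow> bool) \<Rightarrow> 'b set \<Rightarrow> ('b \<Rightarrow> 'b \<Rightarrow> bool)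
    \<Rightarrow> 'a set \<Rightarrow> 'b set \<Rightarrow> ('a \<Rightarrow> 'b) \<Rightarrow> bool" where
  "lattice_iso_on A leA B leB D R f \<longleftrightarrow> bij_betw f D R
     \<and> (\<forall>a\<in>D. \<forall>b\<in>D. \<forall>c\<in>D. is_lub A leA a b c \<longrightarrow> is_lub B leB (f a) (f b) (f c))
     \<and> (\<forall>a\<in>D. \<forall>b\<in>D. \<forall>c\<in>D. is_glb A leA a b c \<longrightarrow> is_glb B leB (f a) (f b) (f c))"

definition covers :: "'s::order \<Rightarrow> 's \<Rightarrow> bool" (infix "\<prec>" 50) where
  "x \<prec> y \<longleftrightarrow> x < y \<and> \<not> (\<exists>z. x < z \<and> z < y)"

definition finite_length_type :: "'s::lattice itself \<Rightarrow> bool" where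
  "finite_length_type _ \<longleftrightarrow> (\<forall>C::'s set. Complete_Partial_Order.chain (\<le>) C \<longrightarrow> finite C)"

text \<open>Partial bijections are maps partial maps; \<open>\<phi> y x\<close> stands for
  \<open>\<phi>_yx\<close>; composition is \<open>\<circ>\<^sub>m\<close>.\<close>
definition connected_system :: "('s::lattice \<Rightarrow> 'a set) \<Rightarrow> ('s \<Rightarrow> 'a \<Rightarrow> 'a \<Rightarrow> bool)
    \<Rightarrow> ('s \<Rightarrow> 's \<Rightarrow> 'a \<rightharpoonup> 'a) \<Rightarrow> bool" where
  "connected_system L le \<phi> \<longleftrightarrow>
     (\<forall>x. fin_length_lattice (L x) (le x))
   \<and> (\<forall>x y. x \<le> y \<longrightarrow> dom (\<phi> y x) \<subseteq> L x \<and> ran (\<phi> y x) \<subseteq> L y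
                      \<and> inj_on (\<phi> y x) (dom (\<phi> y x)))
   \<and> (\<forall>x y. x \<le> y \<and> dom (\<phi> y x) \<noteq> {} \<longrightarrow>
        lfilter (L x) (le x) (dom (\<phi> y x)) \<and> lideal (L y) (le y) (ran (\<phi> y x))
        \<and> lattice_iso_on (L x) (le x) (L y) (le y) (dom (\<phi> y x)) (ran (\<phi> y x))
             (\<lambda>a. the (\<phi> y x a)))
   \<and> (\<forall>x a. \<phi> x x a = (if a \<in> L x then Some a else None))
   \<and> (\<forall>x y. x \<prec> y \<longrightarrow> dom (\<phi> y x) \<noteq> {})
   \<and> (\<forall>x y z. x \<le> z \<and> z \<le> y \<longrightarrow> \<phi> y x = \<phi> y z \<circ>\<^sub>m \<phi> z x)
   \<and> (\<forall>x y. ran (\<phi> (sup x y) x) \<inter> ran (\<phi> (sup x y) y) \<subseteq> ran (\<phi> (sup x y) (inf x y)))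
   \<and> (\<forall>x y. dom (\<phi> x (inf x y)) \<inter> dom (\<phi> y (inf x y)) \<subseteq> dom (\<phi> (sup x y) (inf x y)))"

definition glued_system :: "('s::lattice \<Rightarrow> 'b set) \<Rightarrow> ('s \<Rightarrow> 'b \<Rightarrow> 'b \<Rightarrow> bool) \<Rightarrow> bool" where
  "glued_system M le \<longleftrightarrow>
     (\<forall>x. fin_length_lattice (M x) (le x))
   \<and> (\<forall>x y. x \<le> y \<and> M x \<inter> M y \<noteq> {} \<longrightarrow>
        lfilter (M x) (le x) (M x \<inter> M y) \<and> lideal (M y) (le y) (M x \<inter> M y))
   \<and> (\<forall>x y. x \<le> y \<and> M x \<inter> M y \<noteq> {} \<longrightarrow>
        (\<forall>a\<in>M x \<inter> M y. \<forall>b\<in>M x \<inter> M y. le x a b \<longleftrightarrow> le y a b))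
   \<and> (\<forall>x y. x \<prec> y \<longrightarrow> M x \<inter> M y \<noteq> {})
   \<and> (\<forall>x y. M x \<inter> M y \<subseteq> M (inf x y) \<inter> M (sup x y))"

definition monotone_glued :: "('s::lattice \<Rightarrow> 'b set) \<Rightarrow> bool" where
  "monotone_glued M \<longleftrightarrow> (\<forall>x y. x \<prec> y \<longrightarrow> \<not> M y \<subseteq> M x \<and> \<not> M x \<subseteq> M y)"

definition simrel :: "('s::lattice \<Rightarrow> 'a set) \<Rightarrow> ('s \<Rightarrow> 's \<Rightarrow> 'a \<rightharpoonup> 'a) \<Rightarrow> ('a \<times> 'a) set" where
  "simrel L \<phi> = {(a, b). \<exists>x y. a \<in> L x \<and> b \<in> L y \<and>
      (\<exists>z. sup x y \<le> z \<and> a \<in> dom (\<phi> z x) \<and> b \<in> dom (\<phi> z y) \<and> \<phi> z x a = \<phi> z y b)}"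

definition proj :: "('a \<times> 'a) set \<Rightarrow> 'a \<Rightarrow> 'a set" where
  "proj r a = r `` {a}"

definition Lpi :: "('s::lattice \<Rightarrow> 'a set) \<Rightarrow> ('s \<Rightarrow> 's \<Rightarrow> 'a \<rightharpoonup> 'a) \<Rightarrow> 's \<Rightarrow> 'a set set" where
  "Lpi L \<phi> x = proj (simrel L \<phi>) ` L x"

definition lepi :: "('s::lattice \<Rightarrow> 'a set) \<Rightarrow> ('s \<Rightarrow> 'a \<Rightarrow> 'a \<Rightarrow> bool) \<Rightarrow> ('s \<Rightarrow> 's \<Rightarrow> 'a \<rightharpoonup> 'a)
    \<Rightarrow> 's \<Rightarrow> 'a set \<Rightarrow> 'a set \<Rightarrow> bool" where
  "lepi L le \<phi> x P Q \<longleftrightarrow> (\<exists>a\<in>L x. \<exists>b\<in>L x.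
      P = proj (simrel L \<phi>) a \<and> Q = proj (simrel L \<phi>) b \<and> le x a b)"

end

theory Submission
  imports Defs
begin

text \<open>Two elements are equivalent iff they have the same image at the join of their levels;
  since the maps \<open>\<phi>\<close> are injective and compose, any common image higher up already
  forces this. For transitivity, the middle element \<open>b \<in> L y\<close> has images at \<open>x \<squnion> y\<close> and at
  \<open>y \<squnion> w\<close>, hence (20\<open>\<^sup>\<delta>\<close>, applied at the meet of these two levels) also at their join, which
  is a common witness. On a single \<open>L x\<close> the relation is equality, so \<open>\<pi>\<close> is injective there,
  and for \<open>x \<le> y\<close> the overlap \<open>\<pi>(L x) \<inter> \<pi>(L y)\<close> is \<open>\<pi>(dom \<phi>\<^sub>y\<^sub>x) = \<pi>(im \<phi>\<^sub>y\<^sub>x)\<close>. The filter,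
  ideal and order conditions of a glued system are therefore transported from the connected
  system, condition (4) is (20), and \<open>\<pi>(L y) \<subseteq> \<pi>(L x)\<close> amounts to \<open>im \<phi>\<^sub>y\<^sub>x = L y\<close>.\<close>

lemma is_glb_conversep: "is_glb A le = is_lub A le\<inverse>\<inverse>"
  unfolding is_glb_def is_lub_def by (intro ext) auto

lemma lfilter_conversep: "lfilter A le = lideal A le\<inverse>\<inverse>"
  unfolding lfilter_def lideal_def is_glb_conversep by (intro ext) auto

definition order_iso_on :: "'a set \<Rightarrow> ('a \<Rightarrow> 'a \<Rightarrow> bool) \<Rightarrow> 'b set \<Rightarrow> ('b \<Rightarrow> 'b \<Rightarrow> bool)
    \<Rightarrow> ('a \<Rightarrow> 'b) \<Rightarrow> bool" where
  "order_iso_on A le B leB f \<longleftrightarrow> bij_betw f A B \<and> (\<forall>a\<in>A. \<forall>b\<in>A. leB (f a) (f b) \<longleftrightarrow> le a b)"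

lemma order_iso_onD:
  assumes "order_iso_on A le B leB f"
  shows "B = f ` A" "a \<in> A \<Longrightarrow> b \<in> A \<Longrightarrow> leB (f a) (f b) \<longleftrightarrow> le a b"
  using assms unfolding order_iso_on_def bij_betw_def by auto

lemma order_iso_on_conversep:
  "order_iso_on A le B leB f \<longleftrightarrow> order_iso_on A le\<inverse>\<inverse> B leB\<inverse>\<inverse> f"
  unfolding order_iso_on_def by auto

lemma order_iso_on_is_lub_iff:
  assumes "order_iso_on A le B leB f" "a \<in> A" "b \<in> A" "c \<in> A"
  shows "is_lub B leB (f a) (f b) (f c) \<longleftrightarrow> is_lub A le a b c"
  using assms order_iso_onD[OF assms(1)] unfolding is_lub_def by auto

lemma order_iso_on_lub_exists:
  assumes iso: "order_iso_on A le B leB f" and lub: "\<forall>a\<in>A. \<forall>b\<in>A. \<exists>c. is_lub A le a b c"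
    and "P \<in> B" "Q \<in> B"
  shows "\<exists>c. is_lub B leB P Q c"
proof -
  obtain a b where ab: "a \<in> A" "b \<in> A" "P = f a" "Q = f b"
    using assms(3,4) order_iso_onD(1)[OF iso] by auto
  obtain c where c: "is_lub A le a b c" using lub ab by blast
  then have "c \<in> A" unfolding is_lub_def by auto
  then show ?thesis using order_iso_on_is_lub_iff[OF iso ab(1,2)] c ab by blast
qed

lemma order_iso_on_lattice_on:
  assumes iso: "order_iso_on A le B leB f" and "lattice_on A le"
  shows "lattice_on B leB"
proof -
  note B = order_iso_onD(1)[OF iso] and ord = order_iso_onD(2)[OF iso]
  have "A \<noteq> {}" and refl: "\<forall>a\<in>A. le a a"
    and antisym: "\<forall>a\<in>A. \<forall>b\<in>A. le a b \<and> le b a \<longrightarrow> a = b"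
    and trans: "\<forall>a\<in>A. \<forall>b\<in>A. \<forall>c\<in>A. le a b \<and> le b c \<longrightarrow> le a c"
    and lub: "\<forall>a\<in>A. \<forall>b\<in>A. \<exists>c. is_lub A le a b c"
    and glb: "\<forall>a\<in>A. \<forall>b\<in>A. \<exists>c. is_lub A le\<inverse>\<inverse> a b c"
    using assms(2) unfolding lattice_on_def is_glb_conversep by blast+
  have "B \<noteq> {}" "\<forall>P\<in>B. leB P P" using \<open>A \<noteq> {}\<close> refl B ord by auto
  moreover have "\<forall>P\<in>B. \<forall>Q\<in>B. leB P Q \<and> leB Q P \<longrightarrow> P = Q"
    unfolding B using antisym ord by (metis (no_types, lifting) imageE)
  moreover have "\<forall>P\<in>B. \<forall>Q\<in>B. \<forall>T\<in>B. leB P Q \<and> leB Q T \<longrightarrow> leB P T"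
    unfolding B using trans ord by (metis (no_types, lifting) imageE)
  moreover have "\<forall>P\<in>B. \<forall>Q\<in>B. \<exists>c. is_lub B leB P Q c"
    using order_iso_on_lub_exists[OF iso lub] by blast
  moreover have "\<forall>P\<in>B. \<forall>Q\<in>B. \<exists>c. is_glb B leB P Q c"
    unfolding is_glb_conversep
    using order_iso_on_lub_exists[OF iso[THEN order_iso_on_conversep[THEN iffD1]] glb] by blast
  ultimately show ?thesis unfolding lattice_on_def by (intro conjI)
qed

lemma order_iso_on_fin_length_lattice:
  assumes iso: "order_iso_on A le B leB f" and fin: "fin_length_lattice A le"
  shows "fin_length_lattice B leB"
proof -
  have "finite C" if "C \<subseteq> B" "Complete_Partial_Order.chain leB C" for C
  proof -
    define D where "D = A \<inter> f -` C"
    have C: "C = f ` D" unfolding D_def using that(1) order_iso_onD(1)[OF iso] by auto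
    have "Complete_Partial_Order.chain le D"
      using that(2) order_iso_onD(2)[OF iso] unfolding D_def chain_def by auto
    then have "finite D" using fin unfolding fin_length_lattice_def D_def by blast
    then show ?thesis unfolding C by simp
  qed
  then show ?thesis
    using order_iso_on_lattice_on[OF iso] fin unfolding fin_length_lattice_def by blast
qed

lemma order_iso_on_lideal:
  assumes iso: "order_iso_on A le B leB f" and I: "lideal A le I"
  shows "lideal B leB (f ` I)"
proof -
  note B = order_iso_onD(1)[OF iso] and ord = order_iso_onD(2)[OF iso]
  have IA: "I \<subseteq> A" and "I \<noteq> {}" and down: "\<forall>a\<in>I. \<forall>b\<in>A. le b a \<longrightarrow> b \<in> I"
    and join: "\<forall>a\<in>I. \<forall>b\<in>I. \<forall>c. is_lub A le a b c \<longrightarrow> c \<in> I"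
    using I unfolding lideal_def by blast+
  have "c \<in> f ` I" if PQ: "P \<in> f ` I" "Q \<in> f ` I" and c: "is_lub B leB P Q c" for P Q c
  proof -
    obtain a b where ab: "a \<in> I" "b \<in> I" "P = f a" "Q = f b" using PQ by auto
    obtain c' where c': "c' \<in> A" "c = f c'" using c B unfolding is_lub_def by auto
    have "is_lub A le a b c'" using order_iso_on_is_lub_iff[OF iso] ab c' c IA by blast
    then show ?thesis using join ab c' by blast
  qed
  moreover have "\<forall>P\<in>f ` I. \<forall>Q\<in>B. leB Q P \<longrightarrow> Q \<in> f ` I"
  proof (intro ballI impI)
    fix P Q assume "P \<in> f ` I" "Q \<in> B" "leB Q P"
    moreover obtain a b where "a \<in> I" "b \<in> A" "P = f a" "Q = f b"
      using \<open>P \<in> f ` I\<close> \<open>Q \<in> B\<close> B by auto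
    ultimately show "Q \<in> f ` I" using IA down ord by auto
  qed
  moreover have "f ` I \<subseteq> B" "f ` I \<noteq> {}" using IA \<open>I \<noteq> {}\<close> B by auto
  ultimately show ?thesis unfolding lideal_def by blast
qed

lemma order_iso_on_lfilter:
  "order_iso_on A le B leB f \<Longrightarrow> lfilter A le F \<Longrightarrow> lfilter B leB (f ` F)"
  unfolding lfilter_conversep order_iso_on_conversep[of A le] by (rule order_iso_on_lideal)

text \<open>A lattice isomorphism between a filter and a subset of another lattice is also an
  order isomorphism: \<open>a \<le> a'\<close> iff \<open>a'\<close> is the join of \<open>a\<close> and \<open>a'\<close>, and joins of
  elements of a filter stay in the filter.\<close>
lemma lattice_iso_on_le_iff:
  assumes "lattice_on A le" "lattice_on B leB" "lfilter A le D" "R \<subseteq> B"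
    and iso: "lattice_iso_on A le B leB D R f" and a: "a \<in> D" "a' \<in> D"
  shows "leB (f a) (f a') \<longleftrightarrow> le a a'"
proof -
  have DA: "D \<subseteq> A" and up: "\<forall>a\<in>D. \<forall>b\<in>A. le a b \<longrightarrow> b \<in> D"
    using assms(3) unfolding lfilter_def by blast+
  have inj: "inj_on f D" and fR: "f ` D \<subseteq> B"
    and join: "\<forall>a\<in>D. \<forall>b\<in>D. \<forall>c\<in>D. is_lub A le a b c \<longrightarrow> is_lub B leB (f a) (f b) (f c)"
    using iso assms(4) unfolding lattice_iso_on_def bij_betw_def by blast+
  have reflA: "\<forall>a\<in>A. le a a" and lubA: "\<forall>a\<in>A. \<forall>b\<in>A. \<exists>c. is_lub A le a b c"
    using assms(1) unfolding lattice_on_def by blast+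
  have reflB: "\<forall>a\<in>B. leB a a" and antisymB: "\<forall>a\<in>B. \<forall>b\<in>B. leB a b \<and> leB b a \<longrightarrow> a = b"
    using assms(2) unfolding lattice_on_def by blast+
  show ?thesis
  proof
    assume "le a a'"
    then have "is_lub A le a a' a'" unfolding is_lub_def using reflA DA a by auto
    then have "is_lub B leB (f a) (f a') (f a')" using join a by blast
    then show "leB (f a) (f a')" unfolding is_lub_def by auto
  next
    assume h: "leB (f a) (f a')"
    obtain c where c: "is_lub A le a a' c" using lubA DA a by blast
    have cD: "c \<in> D" using c up a unfolding is_lub_def by auto
    have "is_lub B leB (f a) (f a') (f c)" using join c cD a by blast
    moreover have "is_lub B leB (f a) (f a') (f a')" unfolding is_lub_def using h fR a reflB by auto
    ultimately have "f c = f a'" using antisymB unfolding is_lub_def by blast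
    then have "c = a'" using inj cD a unfolding inj_on_def by blast
    then show "le a a'" using c unfolding is_lub_def by auto
  qed
qed

locale disjoint_connected_system =
  fixes L :: "'s::lattice \<Rightarrow> 'a set"
    and le :: "'s \<Rightarrow> 'a \<Rightarrow> 'a \<Rightarrow> bool"
    and \<phi> :: "'s \<Rightarrow> 's \<Rightarrow> 'a \<rightharpoonup> 'a"
  assumes connected: "connected_system L le \<phi>"
    and disjoint: "\<forall>x y. x \<noteq> y \<longrightarrow> L x \<inter> L y = {}"
begin

abbreviation sim :: "('a \<times> 'a) set" where "sim \<equiv> simrel L \<phi>"
abbreviation \<pi> :: "'a \<Rightarrow> 'a set" where "\<pi> \<equiv> proj sim"

lemma fin_length_lattice_L: "fin_length_lattice (L x) (le x)"
  using connected unfolding connected_system_def by (elim conjE) blast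

lemma lattice_on_L: "lattice_on (L x) (le x)"
  using fin_length_lattice_L unfolding fin_length_lattice_def by blast

lemma dom_phi_subset: "x \<le> y \<Longrightarrow> dom (\<phi> y x) \<subseteq> L x"
  using connected unfolding connected_system_def by (elim conjE) blast

lemma ran_phi_subset: "x \<le> y \<Longrightarrow> ran (\<phi> y x) \<subseteq> L y"
  using connected unfolding connected_system_def by (elim conjE) blast

lemma phi_Some_in: "x \<le> y \<Longrightarrow> \<phi> y x a = Some c \<Longrightarrow> a \<in> L x \<and> c \<in> L y"
  using dom_phi_subset ran_phi_subset by (blast intro: ranI)

lemma phi_Some_inj: "x \<le> y \<Longrightarrow> \<phi> y x a = Some c \<Longrightarrow> \<phi> y x a' = Some c \<Longrightarrow> a = a'"
  using connected unfolding connected_system_def inj_on_def by (elim conjE) (metis domI)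

lemma phi_filter_ideal_iso:
  assumes "x \<le> y" "dom (\<phi> y x) \<noteq> {}"
  shows "lfilter (L x) (le x) (dom (\<phi> y x))" "lideal (L y) (le y) (ran (\<phi> y x))"
    "lattice_iso_on (L x) (le x) (L y) (le y) (dom (\<phi> y x)) (ran (\<phi> y x)) (\<lambda>a. the (\<phi> y x a))"
  using assms connected unfolding connected_system_def by (elim conjE, blast)+

lemma phi_refl: "\<phi> x x a = (if a \<in> L x then Some a else None)"
  using connected unfolding connected_system_def by (elim conjE) metis

lemma dom_phi_nonempty_if_covers: "x \<prec> y \<Longrightarrow> dom (\<phi> y x) \<noteq> {}"
  using connected unfolding connected_system_def by (elim conjE) metis

lemma phi_comp_Some_iff:
  "x \<le> z \<Longrightarrow> z \<le> y \<Longrightarrow> \<phi> y x a = Some c \<longleftrightarrow> (\<exists>d. \<phi> z x a = Some d \<and> \<phi> y z d = Some c)"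
  using connected unfolding connected_system_def by (elim conjE) (simp add: map_comp_Some_iff)

lemma ran_sup_inter_subset: "ran (\<phi> (sup x y) x) \<inter> ran (\<phi> (sup x y) y) \<subseteq> ran (\<phi> (sup x y) (inf x y))"
  using connected unfolding connected_system_def by (elim conjE) metis

lemma dom_inf_inter_subset: "dom (\<phi> x (inf x y)) \<inter> dom (\<phi> y (inf x y)) \<subseteq> dom (\<phi> (sup x y) (inf x y))"
  using connected unfolding connected_system_def by (elim conjE) metis

text \<open>Factor both maps through \<open>inf s t \<ge> y\<close> and apply (20\<open>\<^sup>\<delta>\<close>) there.\<close>
lemma dom_phi_sup:
  assumes "y \<le> s" "y \<le> t" "b \<in> dom (\<phi> s y)" "b \<in> dom (\<phi> t y)"
  shows "b \<in> dom (\<phi> (sup s t) y)"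
proof -
  define m where "m = inf s t"
  have m: "y \<le> m" "m \<le> s" "m \<le> t" "m \<le> sup s t"
    using assms(1,2) unfolding m_def by (auto intro: le_supI1)
  obtain e p where e: "\<phi> m y b = Some e" "\<phi> s m e = Some p"
    using assms(3) phi_comp_Some_iff[OF m(1,2)] by blast
  obtain q where q: "\<phi> t m e = Some q"
    using assms(4) phi_comp_Some_iff[OF m(1,3)] e(1) by fastforce
  have "e \<in> dom (\<phi> (sup s t) m)"
    using dom_inf_inter_subset[of s t] e(2) q unfolding m_def by blast
  then show ?thesis using e(1) phi_comp_Some_iff[OF m(1,4)] by blast
qed

lemma L_unique: "a \<in> L x \<Longrightarrow> a \<in> L x' \<Longrightarrow> x = x'"
  using disjoint by blast

lemma simrelI:
  assumes "a \<in> L x" "b \<in> L y" "sup x y \<le> z" "\<phi> z x a = Some c" "\<phi> z y b = Some c"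
  shows "(a, b) \<in> sim"
proof -
  have "a \<in> dom (\<phi> z x)" "b \<in> dom (\<phi> z y)" "\<phi> z x a = \<phi> z y b" using assms(4,5) by auto
  then show ?thesis using assms(1-3) unfolding simrel_def by blast
qed

lemma simrel_iff:
  assumes a: "a \<in> L x" and b: "b \<in> L y"
  shows "(a, b) \<in> sim \<longleftrightarrow> (\<exists>c. \<phi> (sup x y) x a = Some c \<and> \<phi> (sup x y) y b = Some c)"
proof
  assume "(a, b) \<in> sim"
  then obtain z e where z: "sup x y \<le> z" and e: "\<phi> z x a = Some e" "\<phi> z y b = Some e"
    using L_unique[OF a] L_unique[OF b] unfolding simrel_def by fastforce
  obtain d where d: "\<phi> (sup x y) x a = Some d" "\<phi> z (sup x y) d = Some e"
    using e(1) phi_comp_Some_iff[of x "sup x y" z] z by auto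
  obtain d' where d': "\<phi> (sup x y) y b = Some d'" "\<phi> z (sup x y) d' = Some e"
    using e(2) phi_comp_Some_iff[of y "sup x y" z] z by auto
  have "d = d'" using phi_Some_inj[OF z d(2) d'(2)] .
  then show "\<exists>c. \<phi> (sup x y) x a = Some c \<and> \<phi> (sup x y) y b = Some c" using d d' by blast
qed (use simrelI[OF a b] in blast)

lemma simrel_iff_le: "x \<le> y \<Longrightarrow> a \<in> L x \<Longrightarrow> b \<in> L y \<Longrightarrow> (a, b) \<in> sim \<longleftrightarrow> \<phi> y x a = Some b"
  using simrel_iff phi_refl by (simp add: sup_absorb2)

lemma simrel_subset: "sim \<subseteq> (\<Union>x. L x) \<times> (\<Union>x. L x)"
  unfolding simrel_def by blast

lemma trans_simrel: "trans sim"
proof (rule transI)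
  fix a b c assume ab: "(a, b) \<in> sim" and bc: "(b, c) \<in> sim"
  obtain x y w where xyw: "a \<in> L x" "b \<in> L y" "c \<in> L w"
    using ab bc simrel_subset by blast
  define t where "t = sup (sup x y) (sup y w)"
  obtain p where p: "\<phi> (sup x y) x a = Some p" "\<phi> (sup x y) y b = Some p"
    using ab simrel_iff xyw by blast
  obtain q where q: "\<phi> (sup y w) y b = Some q" "\<phi> (sup y w) w c = Some q"
    using bc simrel_iff xyw by blast
  obtain r where r: "\<phi> t y b = Some r"
    using dom_phi_sup[of y "sup x y" "sup y w" b] p(2) q(1) unfolding t_def by auto
  have "\<phi> t (sup x y) p = Some r"
    using r p(2) phi_comp_Some_iff[of y "sup x y" t] unfolding t_def by auto
  then have "\<phi> t x a = Some r"
    using p(1) phi_comp_Some_iff[of x "sup x y" t] unfolding t_def by auto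
  moreover have "\<phi> t (sup y w) q = Some r"
    using r q(1) phi_comp_Some_iff[of y "sup y w" t] unfolding t_def by auto
  then have "\<phi> t w c = Some r"
    using q(2) phi_comp_Some_iff[of w "sup y w" t] unfolding t_def by auto
  moreover have "sup x w \<le> t" unfolding t_def by (simp add: le_supI1 le_supI2)
  ultimately show "(a, c) \<in> sim" using simrelI[OF xyw(1,3)] by blast
qed

lemma equiv_simrel: "equiv (\<Union>x. L x) sim"
proof (rule equivI)
  show "refl_on (\<Union>x. L x) sim"
    using simrel_subset simrel_iff_le[of x x for x] phi_refl by (auto intro!: refl_onI)
  show "sym sim"
  proof (rule symI)
    fix a b assume ab: "(a, b) \<in> sim"
    then obtain x y where "a \<in> L x" "b \<in> L y" using simrel_subset by blast
    then show "(b, a) \<in> sim" using ab simrel_iff by (metis sup_commute)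
  qed
qed (use simrel_subset trans_simrel in auto)

lemma proj_eq_iff: "a \<in> L x \<Longrightarrow> b \<in> L y \<Longrightarrow> \<pi> a = \<pi> b \<longleftrightarrow> (a, b) \<in> sim"
  using equiv_class_eq_iff[OF equiv_simrel, of a b] unfolding proj_def by blast

lemma inj_on_proj: "inj_on \<pi> (L x)"
  using proj_eq_iff simrel_iff_le[of x x] phi_refl by (auto intro!: inj_onI)

lemma proj_phi: "x \<le> y \<Longrightarrow> \<phi> y x a = Some b \<Longrightarrow> \<pi> a = \<pi> b"
  using proj_eq_iff simrel_iff_le phi_Some_in by blast

lemma order_iso_on_proj: "order_iso_on (L x) (le x) (Lpi L \<phi> x) (lepi L le \<phi> x) \<pi>"
  using inj_on_proj[of x] unfolding order_iso_on_def bij_betw_def Lpi_def lepi_def inj_on_def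
  by blast

lemma lepi_proj_iff: "a \<in> L x \<Longrightarrow> b \<in> L x \<Longrightarrow> lepi L le \<phi> x (\<pi> a) (\<pi> b) \<longleftrightarrow> le x a b"
  using order_iso_onD(2)[OF order_iso_on_proj] .

lemma Lpi_inter_eq_proj_dom:
  assumes "x \<le> y"
  shows "Lpi L \<phi> x \<inter> Lpi L \<phi> y = \<pi> ` dom (\<phi> y x)"
proof
  show "Lpi L \<phi> x \<inter> Lpi L \<phi> y \<subseteq> \<pi> ` dom (\<phi> y x)"
  proof
    fix P assume "P \<in> Lpi L \<phi> x \<inter> Lpi L \<phi> y"
    then obtain a b where ab: "a \<in> L x" "b \<in> L y" "P = \<pi> a" "P = \<pi> b" unfolding Lpi_def by auto
    then have "\<phi> y x a = Some b" using proj_eq_iff simrel_iff_le[OF assms] by metis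
    then show "P \<in> \<pi> ` dom (\<phi> y x)" using ab(3) by blast
  qed
  show "\<pi> ` dom (\<phi> y x) \<subseteq> Lpi L \<phi> x \<inter> Lpi L \<phi> y"
  proof
    fix P assume "P \<in> \<pi> ` dom (\<phi> y x)"
    then obtain a b where ab: "\<phi> y x a = Some b" "P = \<pi> a" by auto
    then show "P \<in> Lpi L \<phi> x \<inter> Lpi L \<phi> y"
      using phi_Some_in[OF assms ab(1)] proj_phi[OF assms ab(1)] unfolding Lpi_def by auto
  qed
qed

lemma proj_dom_eq_proj_ran:
  assumes "x \<le> y"
  shows "\<pi> ` dom (\<phi> y x) = \<pi> ` ran (\<phi> y x)"
proof
  show "\<pi> ` dom (\<phi> y x) \<subseteq> \<pi> ` ran (\<phi> y x)"
    using proj_phi[OF assms] by (force intro: ranI)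
  show "\<pi> ` ran (\<phi> y x) \<subseteq> \<pi> ` dom (\<phi> y x)"
  proof
    fix P assume "P \<in> \<pi> ` ran (\<phi> y x)"
    then obtain a b where "\<phi> y x a = Some b" "P = \<pi> b" by (auto simp: ran_def)
    then show "P \<in> \<pi> ` dom (\<phi> y x)" using proj_phi[OF assms] by (metis domI imageI)
  qed
qed

lemma Lpi_inter_lfilter_lideal:
  assumes "x \<le> y" "Lpi L \<phi> x \<inter> Lpi L \<phi> y \<noteq> {}"
  shows "lfilter (Lpi L \<phi> x) (lepi L le \<phi> x) (Lpi L \<phi> x \<inter> Lpi L \<phi> y)"
    and "lideal (Lpi L \<phi> y) (lepi L le \<phi> y) (Lpi L \<phi> x \<inter> Lpi L \<phi> y)"
proof -
  have "dom (\<phi> y x) \<noteq> {}" using assms Lpi_inter_eq_proj_dom by auto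
  note filter_ideal = phi_filter_ideal_iso(1,2)[OF assms(1) this]
  show "lfilter (Lpi L \<phi> x) (lepi L le \<phi> x) (Lpi L \<phi> x \<inter> Lpi L \<phi> y)"
    unfolding Lpi_inter_eq_proj_dom[OF assms(1)]
    by (rule order_iso_on_lfilter[OF order_iso_on_proj filter_ideal(1)])
  show "lideal (Lpi L \<phi> y) (lepi L le \<phi> y) (Lpi L \<phi> x \<inter> Lpi L \<phi> y)"
    unfolding Lpi_inter_eq_proj_dom[OF assms(1)] proj_dom_eq_proj_ran[OF assms(1)]
    by (rule order_iso_on_lideal[OF order_iso_on_proj filter_ideal(2)])
qed

lemma lepi_agree_on_inter:
  assumes xy: "x \<le> y" and PQ: "P \<in> Lpi L \<phi> x \<inter> Lpi L \<phi> y" "Q \<in> Lpi L \<phi> x \<inter> Lpi L \<phi> y"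
  shows "lepi L le \<phi> x P Q \<longleftrightarrow> lepi L le \<phi> y P Q"
proof -
  obtain a a' b b' where ab: "\<phi> y x a = Some b" "\<phi> y x a' = Some b'" "P = \<pi> a" "Q = \<pi> a'"
    using PQ unfolding Lpi_inter_eq_proj_dom[OF xy] by blast
  then have "dom (\<phi> y x) \<noteq> {}" by auto
  note iso = phi_filter_ideal_iso[OF xy this]
  have "a \<in> dom (\<phi> y x)" "a' \<in> dom (\<phi> y x)" using ab(1,2) by auto
  from lattice_iso_on_le_iff[OF lattice_on_L lattice_on_L iso(1) ran_phi_subset[OF xy] iso(3) this]
  have "le y b b' \<longleftrightarrow> le x a a'" using ab(1,2) by simp
  moreover have "a \<in> L x" "b \<in> L y" "a' \<in> L x" "b' \<in> L y" using phi_Some_in[OF xy] ab(1,2) by auto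
  ultimately show ?thesis
    using ab lepi_proj_iff proj_phi[OF xy ab(1)] proj_phi[OF xy ab(2)] by metis
qed

lemma Lpi_inter_subset_inf_sup:
  "Lpi L \<phi> x \<inter> Lpi L \<phi> y \<subseteq> Lpi L \<phi> (inf x y) \<inter> Lpi L \<phi> (sup x y)"
proof
  fix P assume "P \<in> Lpi L \<phi> x \<inter> Lpi L \<phi> y"
  then obtain a b where ab: "a \<in> L x" "b \<in> L y" "P = \<pi> a" "P = \<pi> b" unfolding Lpi_def by auto
  then obtain c where c: "\<phi> (sup x y) x a = Some c" "\<phi> (sup x y) y b = Some c"
    using proj_eq_iff simrel_iff by metis
  then have "c \<in> ran (\<phi> (sup x y) (inf x y))" using ran_sup_inter_subset[of x y] by (blast intro: ranI)
  then obtain e where e: "\<phi> (sup x y) (inf x y) e = Some c" by (auto simp: ran_def)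
  have "inf x y \<le> sup x y" by (simp add: le_supI1)
  then have "e \<in> L (inf x y)" "c \<in> L (sup x y)" "\<pi> e = \<pi> c" using phi_Some_in proj_phi e by blast+
  moreover have "\<pi> a = \<pi> c" using proj_phi[OF _ c(1)] by simp
  ultimately show "P \<in> Lpi L \<phi> (inf x y) \<inter> Lpi L \<phi> (sup x y)" using ab unfolding Lpi_def by auto
qed

lemma glued_system_Lpi: "glued_system (Lpi L \<phi>) (lepi L le \<phi>)"
  unfolding glued_system_def
proof (intro conjI allI impI)
  fix x :: 's show "fin_length_lattice (Lpi L \<phi> x) (lepi L le \<phi> x)"
    by (rule order_iso_on_fin_length_lattice[OF order_iso_on_proj fin_length_lattice_L])
next
  fix x y :: 's assume "x \<prec> y"
  then show "Lpi L \<phi> x \<inter> Lpi L \<phi> y \<noteq> {}"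
    using dom_phi_nonempty_if_covers Lpi_inter_eq_proj_dom unfolding covers_def by auto
next
  fix x y :: 's assume "x \<le> y \<and> Lpi L \<phi> x \<inter> Lpi L \<phi> y \<noteq> {}"
  then have xy: "x \<le> y" and ne: "Lpi L \<phi> x \<inter> Lpi L \<phi> y \<noteq> {}" by blast+
  show "lfilter (Lpi L \<phi> x) (lepi L le \<phi> x) (Lpi L \<phi> x \<inter> Lpi L \<phi> y)"
    by (rule Lpi_inter_lfilter_lideal(1)[OF xy ne])
  show "lideal (Lpi L \<phi> y) (lepi L le \<phi> y) (Lpi L \<phi> x \<inter> Lpi L \<phi> y)"
    by (rule Lpi_inter_lfilter_lideal(2)[OF xy ne])
  show "\<forall>P\<in>Lpi L \<phi> x \<inter> Lpi L \<phi> y. \<forall>Q\<in>Lpi L \<phi> x \<inter> Lpi L \<phi> y.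
          lepi L le \<phi> x P Q \<longleftrightarrow> lepi L le \<phi> y P Q"
    using lepi_agree_on_inter[OF xy] by blast
qed (rule Lpi_inter_subset_inf_sup)

lemma Lpi_subset_iff:
  assumes "x \<le> y"
  shows "Lpi L \<phi> y \<subseteq> Lpi L \<phi> x \<longleftrightarrow> ran (\<phi> y x) = L y"
    and "Lpi L \<phi> x \<subseteq> Lpi L \<phi> y \<longleftrightarrow> dom (\<phi> y x) = L x"
proof -
  have "Lpi L \<phi> y \<subseteq> Lpi L \<phi> x \<longleftrightarrow> Lpi L \<phi> x \<inter> Lpi L \<phi> y = Lpi L \<phi> y" by blast
  also have "\<dots> \<longleftrightarrow> \<pi> ` ran (\<phi> y x) = \<pi> ` L y"
    unfolding Lpi_inter_eq_proj_dom[OF assms] proj_dom_eq_proj_ran[OF assms] by (simp add: Lpi_def)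
  also have "\<dots> \<longleftrightarrow> ran (\<phi> y x) = L y"
    using inj_on_image_eq_iff[OF inj_on_proj ran_phi_subset[OF assms]] by simp
  finally show "Lpi L \<phi> y \<subseteq> Lpi L \<phi> x \<longleftrightarrow> ran (\<phi> y x) = L y" .
  have "Lpi L \<phi> x \<subseteq> Lpi L \<phi> y \<longleftrightarrow> Lpi L \<phi> x \<inter> Lpi L \<phi> y = Lpi L \<phi> x" by blast
  also have "\<dots> \<longleftrightarrow> \<pi> ` dom (\<phi> y x) = \<pi> ` L x"
    unfolding Lpi_inter_eq_proj_dom[OF assms] by (simp add: Lpi_def)
  also have "\<dots> \<longleftrightarrow> dom (\<phi> y x) = L x"
    using inj_on_image_eq_iff[OF inj_on_proj dom_phi_subset[OF assms]] by simp
  finally show "Lpi L \<phi> x \<subseteq> Lpi L \<phi> y \<longleftrightarrow> dom (\<phi> y x) = L x" .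
qed

lemma monotone_glued_Lpi_iff:
  "monotone_glued (Lpi L \<phi>) \<longleftrightarrow> (\<forall>x y. x \<prec> y \<longrightarrow> ran (\<phi> y x) \<noteq> L y \<and> dom (\<phi> y x) \<noteq> L x)"
  unfolding monotone_glued_def using Lpi_subset_iff unfolding covers_def by (meson less_imp_le)

end

theorem theorem4p2:
  fixes L :: "'s::lattice \<Rightarrow> 'a set"
    and le :: "'s \<Rightarrow> 'a \<Rightarrow> 'a \<Rightarrow> bool"
    and \<phi> :: "'s \<Rightarrow> 's \<Rightarrow> 'a \<rightharpoonup> 'a"
  assumes "finite_length_type TYPE('s)"
    and "connected_system L le \<phi>"
    and "\<forall>x y. x \<noteq> y \<longrightarrow> L x \<inter> L y = {}"
  shows "equiv (\<Union>x. L x) (simrel L \<phi>)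
    \<and> (\<forall>x. inj_on (proj (simrel L \<phi>)) (L x))
    \<and> glued_system (Lpi L \<phi>) (lepi L le \<phi>)
    \<and> (monotone_glued (Lpi L \<phi>) \<longleftrightarrow>
         (\<forall>x y. x \<prec> y \<longrightarrow> ran (\<phi> y x) \<noteq> L y \<and> dom (\<phi> y x) \<noteq> L x))"
proof -
  interpret disjoint_connected_system L le \<phi>
    using assms(2,3) by unfold_locales
  show ?thesis
    using equiv_simrel inj_on_proj glued_system_Lpi monotone_glued_Lpi_iff by blast
qed

end
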